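(* Let $p\geq 5$ be a prime and $r$ a positive integer such that $3$ does not divide $p^r+1$, and let $A(x)=x^{p^r+2}$ on $\mathbb{F}_{p^{2r}}$. For every $a\in\mathbb{F}_{p^{2r}}^*$, the function $\Pi_a(x)=2ax^{p^r+1}+a^{p^r}x^2$ on $\mathbb{F}_{p^{2r}}$ (which differs from the difference function $\Delta_{A,a}(x)=A(x+a)-A(x)$ by an affine function) is EA-equivalent to $x^2$.
   Context: An additive function on $\mathbb{F}_{p^n}$ is one satisfying $L(x+y)=L(x)+L(y)$ for all $x,y$; an affine function is an additive function plus a constant. Two functions $f_1,f_2:\mathbb{F}_{p^n}\to\mathbb{F}_{p^n}$ are extended affine (EA) equivalent if there exist affine functions $l_1,l_2,l_3$ with $l_1,l_2$ permutations of $\mathbb{F}_{p^n}$ such that $f_1(x)=l_1(f_2(l_2(x)))+l_3(x)$ for all $x$. *)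

theory Defs
  imports Main "HOL-Computational_Algebra.Primes"
begin

definition additive :: "('a::field \<Rightarrow> 'a) \<Rightarrow> bool" where
  "additive L \<longleftrightarrow> (\<forall>x y. L (x + y) = L x + L y)"

definition affine :: "('a::field \<Rightarrow> 'a) \<Rightarrow> bool" where
  "affine f \<longleftrightarrow> (\<exists>L c. additive L \<and> (\<forall>x. f x = L x + c))"

definition EA_equivalent :: "('a::field \<Rightarrow> 'a) \<Rightarrow> ('a \<Rightarrow> 'a) \<Rightarrow> bool" where
  "EA_equivalent f1 f2 \<longleftrightarrow>
     (\<exists>l1 l2 l3. affine l1 \<and> affine l2 \<and> affine l3 \<and> bij l1 \<and> bij l2 \<and>
        (\<forall>x. f1 x = l1 (f2 (l2 x)) + l3 x))"

end

theory Submission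
  imports Defs "HOL-Number_Theory.Residues" "HOL-Computational_Algebra.Polynomial"
begin

text \<open>Let \<open>q = p ^ r\<close> and let \<open>F x = x ^ q\<close> be the Frobenius, an involutive automorphism of
  the field with \<open>q\<^sup>2\<close> elements. As \<open>q \<equiv> 1 (mod 3)\<close>, the field contains a root \<open>w\<close> of
  \<open>w\<^sup>2 + w + 1\<close>, and \<open>F w = w\<close>. The \<open>F\<close>-semilinear substitution \<open>x = y + c F(y)\<close> with
  \<open>c = w a / F(a)\<close> turns \<open>2 a x F(x) + F(a) x\<^sup>2\<close> into \<open>u y\<^sup>2 + v F(y\<^sup>2)\<close>: the mixed term is a
  multiple of \<open>w\<^sup>2 + w + 1\<close>. Both \<open>y \<mapsto> y + c F(y)\<close> and \<open>z \<mapsto> u z + v F(z)\<close> are additive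
  bijections, because a map \<open>z \<mapsto> u z + v F(z)\<close> is injective as soon as \<open>u F(u) \<noteq> v F(v)\<close>.\<close>

lemma power_card_minus_one_eq_one:
  fixes x :: "'a::{field,finite}"
  assumes "x \<noteq> 0"
  shows "x ^ (card (UNIV :: 'a set) - 1) = 1"
proof -
  define G :: "'a monoid" where "G = \<lparr>carrier = UNIV - {0}, monoid.mult = (*), one = 1\<rparr>"
  interpret group G
  proof (rule groupI)
    fix y assume "y \<in> carrier G"
    then show "\<exists>z\<in>carrier G. z \<otimes>\<^bsub>G\<^esub> y = \<one>\<^bsub>G\<^esub>"
      by (intro bexI[of _ "inverse y"]) (auto simp: G_def)
  qed (auto simp: G_def mult_ac)
  have pow: "y [^]\<^bsub>G\<^esub> n = y ^ n" for y and n :: nat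
    by (induction n) (simp_all add: G_def)
  have order: "Coset.order G = card (UNIV :: 'a set) - 1"
    by (simp add: Coset.order_def G_def card_Diff_singleton)
  have "x [^]\<^bsub>G\<^esub> Coset.order G = 1"
    using pow_order_eq_1[of x] assms by (simp add: G_def)
  then show ?thesis
    by (simp only: pow order)
qed

lemma power_card_eq_self:
  fixes x :: "'a::{field,finite}"
  shows "x ^ card (UNIV :: 'a set) = x"
proof (cases "x = 0")
  case False
  have "x ^ card (UNIV :: 'a set) = x * x ^ (card (UNIV :: 'a set) - 1)"
    using finite_UNIV_card_ge_0[where ?'a = 'a] by (simp flip: power_Suc)
  with power_card_minus_one_eq_one[OF False] show ?thesis
    by simp
qed (simp add: finite_UNIV_card_ge_0)

lemma CHAR_eq_prime_if_card_eq_power: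
  fixes p k :: nat
  assumes "prime p" and "k > 0" and "card (UNIV :: 'a::{field,finite} set) = p ^ k"
  shows "CHAR('a) = p"
proof -
  have prime_char: "prime CHAR('a)"
    by (rule prime_CHAR_semidom[OF finite_imp_CHAR_pos]) simp
  have "CHAR('a) dvd p ^ k"
    using CHAR_dvd_CARD[where 'a = 'a] assms(3) by simp
  then have "CHAR('a) dvd p"
    using prime_char prime_dvd_power by blast
  then show ?thesis
    using prime_char assms(1) primes_dvd_imp_eq by blast
qed

text \<open>The \<open>m\<close> roots of \<open>X ^ m - 1\<close>, where \<open>3 m = card UNIV - 1\<close>, cannot exhaust the nonzero
  elements, and the \<open>m\<close>-th power of any other nonzero element is a cube root of unity \<open>\<noteq> 1\<close>.\<close>

lemma exists_primitive_cube_root_of_unity: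
  assumes "3 dvd card (UNIV :: 'a::{field,finite} set) - 1"
  shows "\<exists>w::'a. w\<^sup>2 + w + 1 = 0"
proof -
  define m where "m = (card (UNIV :: 'a set) - 1) div 3"
  have m3: "3 * m = card (UNIV :: 'a set) - 1"
    using assms unfolding m_def by simp
  have card_ge_2: "card (UNIV :: 'a set) \<ge> 2"
    using card_mono[of "UNIV :: 'a set" "{0, 1}"] by simp
  define P :: "'a poly" where "P = monom 1 m + [:-1:]"
  have "m > 0"
    using m3 card_ge_2 by simp
  then have deg: "degree P = m"
    unfolding P_def by (subst degree_add_eq_left) (simp_all add: degree_monom_eq)
  with \<open>m > 0\<close> have nonzero: "P \<noteq> 0"
    by auto
  have "\<exists>u. u \<noteq> 0 \<and> poly P u \<noteq> 0"
  proof (rule ccontr)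
    assume "\<not> ?thesis"
    then have "UNIV - {0} \<subseteq> {x. poly P x = 0}"
      by auto
    then have "card (UNIV - {0::'a}) \<le> card {x. poly P x = 0}"
      by (intro card_mono) (simp_all add: poly_roots_finite nonzero)
    also have "\<dots> \<le> m"
      using card_poly_roots_bound[OF nonzero] deg by simp
    finally have "card (UNIV - {0::'a}) \<le> m" .
    then show False
      using m3 card_ge_2 by (simp add: card_Diff_singleton)
  qed
  then obtain u :: 'a where "u \<noteq> 0" and "u ^ m \<noteq> 1"
    by (auto simp: P_def poly_monom)
  moreover have "(u ^ m) ^ 3 = 1"
    using power_card_minus_one_eq_one[OF \<open>u \<noteq> 0\<close>] m3
    by (simp flip: power_mult add: mult.commute)
  then have "(u ^ m - 1) * ((u ^ m)\<^sup>2 + u ^ m + 1) = 0"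
    by (simp add: algebra_simps power2_eq_square power3_eq_cube)
  ultimately show ?thesis
    by auto
qed

lemma power_eq_self_if_cube_root_of_unity:
  fixes w :: "'a::comm_ring_1"
  assumes "w\<^sup>2 + w + 1 = 0" and "n mod 3 = 1"
  shows "w ^ n = w"
proof -
  have "w ^ 3 = 1"
    using arg_cong[OF assms(1), of "\<lambda>z. (w - 1) * z"]
    by (simp add: algebra_simps power2_eq_square power3_eq_cube)
  have "n = 3 * (n div 3) + 1"
    using assms(2) by presburger
  then have "w ^ n = (w ^ 3) ^ (n div 3) * w"
    by (metis power_mult power_Suc2 Suc_eq_plus1)
  with \<open>w ^ 3 = 1\<close> show ?thesis
    by simp
qed

lemma prime_power_mod_3:
  fixes p r :: nat
  assumes "prime p" and "p \<noteq> 3" and "\<not> 3 dvd p ^ r + 1"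
  shows "p ^ r mod 3 = 1"
proof -
  have "\<not> 3 dvd p"
    using assms(1,2) primes_dvd_imp_eq[of 3 p] by auto
  then have "\<not> 3 dvd p ^ r"
    using prime_dvd_power[of "3::nat" p r] by auto
  with assms(3) show ?thesis
    by presburger
qed

lemma primitive_cube_root_of_unity_neq:
  fixes w :: "'a::field"
  assumes "w\<^sup>2 + w + 1 = 0" and "(3::'a) \<noteq> 0"
  shows "w \<noteq> 1" and "w\<^sup>2 \<noteq> 1"
proof -
  show "w \<noteq> 1"
    using assms by auto
  show "w\<^sup>2 \<noteq> 1"
  proof
    assume "w\<^sup>2 = 1"
    with assms(1) have "w = - 2"
      by (simp add: add_eq_0_iff)
    with \<open>w\<^sup>2 = 1\<close> have "(4::'a) = 1"
      by simp
    have "(3::'a) = 4 - 1"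
      by simp
    also have "\<dots> = 0"
      using \<open>(4::'a) = 1\<close> by simp
    finally show False
      using assms(2) by simp
  qed
qed

(* Qualified names: the locale Modules.additive of Main would otherwise take precedence. *)
lemma additive_inv:
  assumes "Defs.additive L" and "bij L"
  shows "Defs.additive (inv_into UNIV L)"
  unfolding Defs.additive_def
proof (intro allI)
  fix x y
  have "L (inv_into UNIV L x + inv_into UNIV L y) = x + y"
    using assms by (simp add: Defs.additive_def bij_is_surj surj_f_inv_f)
  then show "inv_into UNIV L (x + y) = inv_into UNIV L x + inv_into UNIV L y"
    using assms(2) by (metis bij_inv_eq_iff)
qed

lemma affine_if_additive: "Defs.additive L \<Longrightarrow> affine L"
  unfolding affine_def by (intro exI[of _ L] exI[of _ 0]) simp

lemma EA_equivalent_if_additive_conjugate: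
  fixes f g L1 L2 :: "'a::field \<Rightarrow> 'a"
  assumes "Defs.additive L1" and "bij L1" and "Defs.additive L2" and "bij L2"
    and "\<And>y. f (L2 y) = L1 (g y)"
  shows "EA_equivalent f g"
  unfolding EA_equivalent_def
proof (intro exI conjI)
  show "affine L1" "affine (inv_into UNIV L2)"
    using assms(1-4) by (simp_all add: affine_if_additive additive_inv)
  show "bij L1" "bij (inv_into UNIV L2)"
    using assms(2,4) by (simp_all add: bij_imp_bij_inv)
  show "affine (\<lambda>_. 0)"
    by (rule affine_if_additive) (simp add: Defs.additive_def)
  show "\<forall>x. f x = L1 (g (inv_into UNIV L2 x)) + 0"
    using assms(4,5) by (metis add_0_right bij_inv_eq_iff)
qed

locale involutive_field_automorphism =
  fixes F :: "'a::field \<Rightarrow> 'a"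
  assumes add: "F (x + y) = F x + F y"
    and mult: "F (x * y) = F x * F y"
    and involution: "F (F x) = x"
begin

lemma zero [simp]: "F 0 = 0"
  using add[of 0 0] by (metis add_cancel_right_right)

lemma one [simp]: "F 1 = 1"
proof -
  have "F 1 \<noteq> 0"
    using involution[of 1] by (metis zero one_neq_zero)
  with mult[of 1 1] show ?thesis
    by simp
qed

lemma minus: "F (- x) = - F x"
  using add[of x "- x"] by (simp add: add_eq_0_iff)

lemma diff: "F (x - y) = F x - F y"
  using add[of x "- y"] by (simp add: minus)

lemma of_nat [simp]: "F (of_nat n) = of_nat n"
  by (induction n) (simp_all add: add)

lemma numeral [simp]: "F (numeral n) = numeral n"
  using of_nat[of "numeral n"] by simp

lemma inverse: "F (inverse x) = inverse (F x)"
proof (cases "x = 0")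
  case False
  then have "F x * F (inverse x) = 1"
    by (simp flip: mult)
  then show ?thesis
    by (simp add: inverse_unique)
qed simp

lemma divide: "F (x / y) = F x / F y"
  by (simp add: divide_inverse mult inverse)

lemma power: "F (x ^ n) = F x ^ n"
  by (induction n) (simp_all add: mult)

lemma eq_0_iff [simp]: "F x = 0 \<longleftrightarrow> x = 0"
  by (metis involution zero)

lemma semilinear_additive: "Defs.additive (\<lambda>z. u * z + v * F z)"
  by (simp add: Defs.additive_def add algebra_simps)

lemma semilinear_inj:
  assumes "u * F u \<noteq> v * F v"
  shows "inj (\<lambda>z. u * z + v * F z)"
proof (rule injI)
  fix x y
  assume "u * x + v * F x = u * y + v * F y"
  then have kernel: "u * (x - y) = - (v * F (x - y))"
    by (simp add: diff algebra_simps)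
  then have "F (u * (x - y)) = F (- (v * F (x - y)))"
    by (rule arg_cong)
  then have conj: "F u * F (x - y) = - (F v * (x - y))"
    by (simp only: mult minus involution)
  have "u * F u * (x - y) = F u * (u * (x - y))"
    by (simp only: ac_simps)
  also have "\<dots> = - (v * (F u * F (x - y)))"
    by (simp only: kernel mult_minus_right ac_simps)
  also have "\<dots> = v * F v * (x - y)"
    by (simp only: conj mult_minus_right minus_minus ac_simps)
  finally show "x = y"
    using assms by simp
qed

lemma twisted_square_substitution:
  assumes "F w = w" and "w\<^sup>2 + w + 1 = 0" and "a \<noteq> 0"
  defines "c \<equiv> w * a / F a"
  shows "2 * a * (y + c * F y) * F (y + c * F y) + F a * (y + c * F y)\<^sup>2
           = F a * (1 + 2 * w) * y\<^sup>2 + c * a * (2 + w) * F (y\<^sup>2)"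
proof -
  have "F c = w * F a / a"
    unfolding c_def by (simp add: divide mult involution assms(1))
  then have Fl2: "F (y + c * F y) = F y + w * F a / a * y"
    by (simp add: add mult involution)
  have Fsq: "F (y\<^sup>2) = (F y)\<^sup>2"
    by (simp add: power)
  have "2 * a * (y + c * F y) * F (y + c * F y) + F a * (y + c * F y)\<^sup>2
             - (F a * (1 + 2 * w) * y\<^sup>2 + c * a * (2 + w) * F (y\<^sup>2))
           = 2 * a * y * F y * (w\<^sup>2 + w + 1)"
    unfolding Fl2 Fsq using assms(3) by (simp add: c_def field_simps power2_eq_square)
  with assms(2) show ?thesis
    by simp
qed

lemma EA_equivalent_twisted_square:
  assumes "finite (UNIV :: 'a set)"
    and "F w = w" and "w\<^sup>2 + w + 1 = 0" and "(3::'a) \<noteq> 0" and "a \<noteq> 0"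
  shows "EA_equivalent (\<lambda>x. 2 * a * x * F x + F a * x\<^sup>2) (\<lambda>x. x\<^sup>2)"
proof -
  define c where "c = w * a / F a"
  define u where "u = F a * (1 + 2 * w)"
  define v where "v = c * a * (2 + w)"
  have Fc: "F c = w * F a / a"
    unfolding c_def by (simp add: divide mult involution assms(2))
  note w_neq = primitive_cube_root_of_unity_neq[OF assms(3,4)]
  have "c * F c = w\<^sup>2"
    unfolding Fc using assms(5) by (simp add: c_def power2_eq_square)
  with w_neq(2) have "1 * F 1 \<noteq> c * F c"
    by simp
  then have "inj (\<lambda>y. 1 * y + c * F y)"
    by (rule semilinear_inj)
  have Fu: "F u = a * (1 + 2 * w)"
    unfolding u_def by (simp add: add mult involution assms(2))
  have Fv: "F v = w * F a / a * F a * (2 + w)"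
    unfolding v_def by (simp add: add mult involution assms(2) Fc)
  have "u * F u - v * F v = - 3 * a * F a * (1 - w)"
  proof -
    have "u * F u - v * F v - (- 3 * a * F a * (1 - w))
          = a * F a * (w\<^sup>2 + w + 1) * (4 - 3 * w - w\<^sup>2)"
      unfolding Fu Fv unfolding u_def v_def c_def using assms(5)
      by (simp add: field_simps power2_eq_square)
    with assms(3) show ?thesis
      by (simp add: eq_neg_iff_add_eq_0)
  qed
  with assms(4,5) w_neq(1) have "u * F u \<noteq> v * F v"
    by auto
  then have "inj (\<lambda>z. u * z + v * F z)"
    by (rule semilinear_inj)
  show ?thesis
  proof (rule EA_equivalent_if_additive_conjugate)
    show "Defs.additive (\<lambda>z. u * z + v * F z)" "Defs.additive (\<lambda>y. 1 * y + c * F y)"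
      by (fact semilinear_additive)+
    show "bij (\<lambda>z. u * z + v * F z)" "bij (\<lambda>y. 1 * y + c * F y)"
      using assms(1) \<open>inj (\<lambda>z. u * z + v * F z)\<close> \<open>inj (\<lambda>y. 1 * y + c * F y)\<close>
      by (simp_all add: bij_def finite_UNIV_inj_surj)
    show "2 * a * (1 * y + c * F y) * F (1 * y + c * F y) + F a * (1 * y + c * F y)\<^sup>2
          = u * y\<^sup>2 + v * F (y\<^sup>2)" for y
      using twisted_square_substitution[OF assms(2,3,5)] by (simp add: c_def u_def v_def)
  qed
qed

end

lemma frobenius_involutive:
  fixes r :: nat
  assumes "card (UNIV :: 'a::{field,finite} set) = CHAR('a) ^ (2 * r)"
  shows "involutive_field_automorphism (\<lambda>x::'a. x ^ CHAR('a) ^ r)"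
proof
  have "prime CHAR('a)"
    by (rule prime_CHAR_semidom[OF finite_imp_CHAR_pos]) simp
  then show "(x + y) ^ CHAR('a) ^ r = x ^ CHAR('a) ^ r + y ^ CHAR('a) ^ r" for x y :: 'a
    by (rule freshmans_dream') simp
  show "(x * y) ^ CHAR('a) ^ r = x ^ CHAR('a) ^ r * y ^ CHAR('a) ^ r" for x y :: 'a
    by (fact power_mult_distrib)
  show "(x ^ CHAR('a) ^ r) ^ CHAR('a) ^ r = x" for x :: 'a
    using power_card_eq_self[of x] assms
    by (simp flip: power_mult power_add add: mult_2)
qed

theorem mainTheorem2:
  fixes p r :: nat and a :: "'a::{field,finite}"
  assumes "prime p" and "p \<ge> 5" and "r > 0"
    and "\<not> (3 dvd (p ^ r + 1))"
    and "card (UNIV :: 'a set) = p ^ (2 * r)"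
    and "a \<noteq> 0"
  shows "EA_equivalent (\<lambda>x::'a. 2 * a * x ^ (p ^ r + 1) + a ^ (p ^ r) * x ^ 2) (\<lambda>x. x ^ 2)"
proof -
  define q where "q = p ^ r"
  have char: "CHAR('a) = p"
    using CHAR_eq_prime_if_card_eq_power[of p "2 * r"] assms(1,3,5) by simp
  interpret frobenius: involutive_field_automorphism "\<lambda>x::'a. x ^ q"
    using frobenius_involutive[where 'a = 'a and r = r] assms(5) char by (simp add: q_def)
  have "(3::'a) \<noteq> 0"
    using of_nat_eq_0_iff_char_dvd[of 3, where 'a = 'a] char assms(2)
    by (auto dest: dvd_imp_le)
  have q_mod_3: "q mod 3 = 1"
    using prime_power_mod_3[OF assms(1) _ assms(4)] assms(2) by (simp add: q_def)
  then have "3 dvd card (UNIV :: 'a set) - 1"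
    using assms(5) mod_mult_eq[of q 3 q] dvd_minus_mod[of 3 "q * q"]
    by (simp add: q_def mult_2 power_add)
  then obtain w :: 'a where w: "w\<^sup>2 + w + 1 = 0"
    using exists_primitive_cube_root_of_unity by blast
  have "EA_equivalent (\<lambda>x::'a. 2 * a * x * x ^ q + a ^ q * x\<^sup>2) (\<lambda>x. x\<^sup>2)"
    using frobenius.EA_equivalent_twisted_square[OF _ power_eq_self_if_cube_root_of_unity[OF w q_mod_3] w
        \<open>(3::'a) \<noteq> 0\<close> assms(6)] by simp
  then show ?thesis
    by (simp add: q_def mult.assoc)
qed

end
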